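(* Let $H$ be an infinite-dimensional separable complex Hilbert space and let $A \in C([0,1],L(H))$. Then there exist mutually orthogonal infinite-dimensional closed subspaces $M_k\subset H$, $k\in\mathbb N$, such that \[ W_e\bigl(P_{M_k}A(t){\upharpoonright}_{M_k}\bigr)=W_e(A(t)) \] for all $k\in\mathbb N$ and $t\in[0,1]$.
   Context: $P_M$ is the orthogonal projection onto $M$ and $A{\upharpoonright}_M$ the restriction to $M$, so $P_MA{\upharpoonright}_M\in L(M)$. For $T\in L(K)$ on an infinite-dimensional Hilbert space $K$, the essential numerical range $W_e(T)$ is the set of all $\lambda\in\mathbb C$ for which there is an orthonormal sequence $(u_n)$ in $K$ with $\langle Tu_n,u_n\rangle\to\lambda$. *)

theory Defs
  imports "HOL-Analysis.Analysis"
begin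

text \<open>The HOL distribution has no complex inner product
spaces, so we introduce the class of complex Hilbert spaces: a real Banach space
carrying a complex scalar multiplication (extending the real one) and a complex
inner product, linear in the first argument, conjugate symmetric, and inducing the norm.\<close>

class chilbert = banach +
  fixes scaleC :: "complex \<Rightarrow> 'a \<Rightarrow> 'a"
    and cinner :: "'a \<Rightarrow> 'a \<Rightarrow> complex"
  assumes scaleC_add_right: "scaleC c (x + y) = scaleC c x + scaleC c y"
    and scaleC_add_left: "scaleC (c + d) x = scaleC c x + scaleC d x"
    and scaleC_scaleC: "scaleC c (scaleC d x) = scaleC (c * d) x"
    and scaleC_one: "scaleC 1 x = x"
    and scaleR_scaleC: "scaleR r x = scaleC (complex_of_real r) x"
    and cinner_add_left: "cinner (x + y) z = cinner x z + cinner y z"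
    and cinner_scaleC_left: "cinner (scaleC c x) y = c * cinner x y"
    and cinner_commute: "cinner y x = cnj (cinner x y)"
    and cinner_nonneg: "0 \<le> Re (cinner x x)"
    and norm_cinner: "norm x = sqrt (Re (cinner x x))"

definition cspan :: "'a::chilbert set \<Rightarrow> 'a set" where
  "cspan F = {(\<Sum>x\<in>S. scaleC (c x) x) | S c. finite S \<and> S \<subseteq> F}"

definition csubspace :: "'a::chilbert set \<Rightarrow> bool" where
  "csubspace M \<longleftrightarrow> 0 \<in> M \<and> (\<forall>x\<in>M. \<forall>y\<in>M. x + y \<in> M) \<and> (\<forall>c. \<forall>x\<in>M. scaleC c x \<in> M)"

definition inf_dim :: "'a::chilbert set \<Rightarrow> bool" where
  "inf_dim M \<longleftrightarrow> (\<forall>F. finite F \<and> F \<subseteq> M \<longrightarrow> cspan F \<noteq> M)"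

definition separable_space :: "'a::metric_space itself \<Rightarrow> bool" where
  "separable_space _ \<longleftrightarrow> (\<exists>D::'a set. countable D \<and> closure D = UNIV)"

text \<open>Bounded complex-linear operators are the elements of type 'a \<Rightarrow>L 'a
(bounded real-linear maps) which are in addition complex linear.\<close>
definition clinear_op :: "('a::chilbert \<Rightarrow>\<^sub>L 'a) \<Rightarrow> bool" where
  "clinear_op T \<longleftrightarrow> (\<forall>c x. blinfun_apply T (scaleC c x) = scaleC c (blinfun_apply T x))"

definition orthonormal_seq :: "(nat \<Rightarrow> 'a::chilbert) \<Rightarrow> bool" where
  "orthonormal_seq u \<longleftrightarrow> (\<forall>n m. cinner (u n) (u m) = (if n = m then 1 else 0))"

definition cproj :: "'a::chilbert set \<Rightarrow> 'a \<Rightarrow> 'a" where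
  "cproj M x = (THE y. y \<in> M \<and> (\<forall>z\<in>M. cinner (x - y) z = 0))"

text \<open>Essential numerical range of an operator T on the (infinite-dimensional)
Hilbert space K (a closed subspace of H); only the values of T on K matter.\<close>
definition ess_numrange :: "'a::chilbert set \<Rightarrow> ('a \<Rightarrow> 'a) \<Rightarrow> complex set" where
  "ess_numrange K T = {l. \<exists>u. (\<forall>n. u n \<in> K) \<and> orthonormal_seq u \<and>
      (\<lambda>n. cinner (T (u n)) (u n)) \<longlonglongrightarrow> l}"

end

theory Submission
  imports Defs
begin

(* Enumerate a dense sequence (t_j, lambda_j) in the set of pairs with lambda_j in W_e(A(t_j)),
   which is separable as a subset of R x C. Any lambda in W_e(T) can be approximated by
   <T x, x> for unit vectors x orthogonal to a prescribed finite family, so one orthonormal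
   sequence v can be chosen inductively such that, for n = <k, <j, i>>, the value
   <A(t_j) v_n, v_n> lies within 1/(i+1) of lambda_j. Hence the closed span M_k of the k-th
   block of v has lambda_j in W_e(A(t_j)) restricted to M_k for every j. The set of pairs
   (T, lambda) with lambda in W_e(T) restricted to M_k is closed and A is continuous, which
   extends this to all t; compressing by P_{M_k} does not change <T u, u> for u in M_k. *)

interpretation cvs: vector_space "scaleC :: complex \<Rightarrow> 'a::chilbert \<Rightarrow> 'a"
  by unfold_locales (auto simp: scaleC_add_right scaleC_add_left scaleC_scaleC scaleC_one)

lemma cspan_eq_span: "cspan = cvs.span"
  unfolding cspan_def cvs.span_explicit by (auto intro!: ext)

lemma csubspace_eq_subspace: "csubspace = cvs.subspace"
  unfolding csubspace_def cvs.subspace_def by (auto intro!: ext)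

lemma cinner_zero_left [simp]: "cinner 0 y = 0"
  using cinner_add_left[of 0 0 y] by simp

lemma cinner_add_right: "cinner x (y + z) = cinner x y + cinner x z"
  by (metis cinner_add_left cinner_commute complex_cnj_add)

lemma cinner_zero_right [simp]: "cinner x 0 = 0"
  using cinner_add_right[of x 0 0] by simp

lemma cinner_scaleC_right: "cinner x (scaleC c y) = cnj c * cinner x y"
  by (metis cinner_scaleC_left cinner_commute complex_cnj_mult)

lemma cinner_minus_left: "cinner (- x) y = - cinner x y"
proof -
  have "cinner x y + cinner (- x) y = 0"
    using cinner_add_left[of x "- x" y] by simp
  then show ?thesis by (simp add: eq_neg_iff_add_eq_0 add.commute)
qed

lemma cinner_diff_left: "cinner (x - y) z = cinner x z - cinner y z"
  using cinner_add_left[of x "- y" z] by (simp add: cinner_minus_left)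

lemma cinner_diff_right: "cinner x (y - z) = cinner x y - cinner x z"
  by (metis cinner_diff_left cinner_commute complex_cnj_diff)

lemma cinner_sum_left: "cinner (sum f S) y = (\<Sum>i\<in>S. cinner (f i) y)"
  by (induction S rule: infinite_finite_induct) (auto simp: cinner_add_left)

lemma cinner_sum_right: "cinner y (sum f S) = (\<Sum>i\<in>S. cinner y (f i))"
  by (induction S rule: infinite_finite_induct) (auto simp: cinner_add_right)

lemma cinner_scaleR_left: "cinner (scaleR r x) y = of_real r * cinner x y"
  by (simp add: scaleR_scaleC cinner_scaleC_left)

lemma cinner_scaleR_right: "cinner x (scaleR r y) = of_real r * cinner x y"
  by (simp add: scaleR_scaleC cinner_scaleC_right)

lemma cinner_self: "cinner x x = complex_of_real ((norm x)\<^sup>2)"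
proof -
  have "Im (cinner x x) = 0"
    using cinner_commute[of x x] by (metis cnj.simps(2) neg_equal_zero)
  then show ?thesis
    using norm_cinner[of x] cinner_nonneg[of x] by (simp add: complex_eq_iff)
qed

lemma norm_scaleC: "norm (scaleC c x) = cmod c * norm x"
proof -
  have "cinner (scaleC c x) (scaleC c x) = (c * cnj c) * of_real ((norm x)\<^sup>2)"
    by (simp add: cinner_scaleC_left cinner_scaleC_right cinner_self[of x] mult.assoc)
  also have "\<dots> = of_real ((cmod c * norm x)\<^sup>2)"
    by (simp add: complex_norm_square[symmetric] power_mult_distrib)
  finally have "(norm (scaleC c x))\<^sup>2 = (cmod c * norm x)\<^sup>2"
    using cinner_self[of "scaleC c x"] by (metis of_real_eq_iff)
  then show ?thesis by (simp add: power2_eq_iff_nonneg)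
qed

lemma Cauchy_Schwarz_cinner: "cmod (cinner x y) \<le> norm x * norm y"
proof (cases "y = 0")
  case False
  define a where "a = cinner x y"
  define r where "r = (norm y)\<^sup>2"
  have r: "r > 0" using False by (simp add: r_def)
  define z where "z = x - scaleC (a / of_real r) y"
  have aa: "a * cnj a = of_real ((cmod a)\<^sup>2)"
    using complex_norm_square[of a] by simp
  have "cinner z z = of_real ((norm x)\<^sup>2 - (cmod a)\<^sup>2 / r)"
    using r unfolding z_def
    by (simp add: cinner_diff_left cinner_diff_right cinner_scaleC_left cinner_scaleC_right
        cinner_self[of x] cinner_self[of y, folded r_def] cinner_commute[of y x, folded a_def]
        a_def[symmetric] aa field_simps power2_eq_square)
  then have "0 \<le> (norm x)\<^sup>2 - (cmod a)\<^sup>2 / r"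
    using cinner_nonneg[of z] by simp
  then have "(cmod a)\<^sup>2 \<le> (norm x * norm y)\<^sup>2"
    using r by (simp add: r_def power_mult_distrib field_simps)
  then show ?thesis
    unfolding a_def using power2_le_imp_le by force
qed simp

lemma bounded_linear_cinner_left: "bounded_linear (\<lambda>x. cinner x y)"
  by (rule bounded_linear_intro[where K="norm y"])
     (auto simp: cinner_add_left cinner_scaleR_left scaleR_conv_of_real Cauchy_Schwarz_cinner)

lemma bounded_linear_cinner_right: "bounded_linear (\<lambda>y. cinner x y)"
  by (rule bounded_linear_intro[where K="norm x"])
     (auto simp: cinner_add_right cinner_scaleR_right scaleR_conv_of_real,
      metis Cauchy_Schwarz_cinner mult.commute)

lemma bounded_linear_scaleC: "bounded_linear (scaleC c :: 'a::chilbert \<Rightarrow> 'a)"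
  by (rule bounded_linear_intro[where K="cmod c"])
     (auto simp: scaleC_add_right scaleR_scaleC scaleC_scaleC norm_scaleC mult.commute)

lemma bounded_linear_scaleC_left: "bounded_linear (\<lambda>c. scaleC c (x::'a::chilbert))"
  by (rule bounded_linear_intro[where K="norm x"])
     (auto simp: scaleC_add_left scaleR_scaleC scaleC_scaleC norm_scaleC scaleR_conv_of_real)

lemma csubspace_scaleR: "csubspace K \<Longrightarrow> x \<in> K \<Longrightarrow> scaleR r x \<in> K"
  by (simp add: csubspace_def scaleR_scaleC)

lemma csubspace_UNIV: "csubspace UNIV"
  by (simp add: csubspace_def)

lemma csubspace_closure:
  assumes S: "csubspace S"
  shows "csubspace (closure S)"
proof -
  have "(\<lambda>p. fst p + snd p) ` closure (S \<times> S) \<subseteq> closure S"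
    using S closure_subset[of S]
    by (intro image_closure_subset continuous_intros) (auto simp: csubspace_def)
  moreover have "scaleC c ` closure S \<subseteq> closure S" for c
    using S closure_subset[of S]
    by (intro image_closure_subset linear_continuous_on bounded_linear_scaleC)
      (auto simp: csubspace_def)
  ultimately show ?thesis
    using S closure_subset unfolding csubspace_def closure_Times by (fastforce simp: image_subset_iff)
qed

lemma csubspace_closure_cspan: "csubspace (closure (cspan S))"
  by (rule csubspace_closure) (simp add: cspan_eq_span csubspace_eq_subspace)

lemma closure_cspan_subset:
  assumes "S \<subseteq> Z" "closed Z" "csubspace Z"
  shows "closure (cspan S) \<subseteq> Z"
  using assms cvs.span_minimal closure_minimal
  by (metis cspan_eq_span csubspace_eq_subspace)

lemma superset_closure_cspan: "S \<subseteq> closure (cspan S)"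
  using closure_subset cvs.span_superset by (fastforce simp: cspan_eq_span)

lemma orthogonal_closure_cspan:
  assumes "\<forall>x\<in>S. \<forall>y\<in>S'. cinner x y = 0" "x \<in> closure (cspan S)" "y \<in> closure (cspan S')"
  shows "cinner x y = 0"
proof -
  have closed: "closed {x. cinner x y = 0}" "closed {y. cinner x y = 0}" for x y :: 'a
    by (intro closed_Collect_eq continuous_intros linear_continuous_on
        bounded_linear_cinner_left bounded_linear_cinner_right)+
  have csubspace: "csubspace {x. cinner x y = 0}" "csubspace {y. cinner x y = 0}" for x y :: 'a
    by (auto simp: csubspace_def cinner_add_left cinner_add_right cinner_scaleC_left cinner_scaleC_right)
  have "closure (cspan S) \<subseteq> {x. cinner x y = 0}" if "y \<in> S'" for y
    using assms(1) that by (intro closure_cspan_subset closed csubspace) auto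
  then have "closure (cspan S') \<subseteq> {y. cinner x y = 0}"
    using assms(2) by (intro closure_cspan_subset closed csubspace) auto
  then show ?thesis using assms(3) by blast
qed

definition orthonormal_on :: "'b set \<Rightarrow> ('b \<Rightarrow> 'a::chilbert) \<Rightarrow> bool" where
  "orthonormal_on I w \<longleftrightarrow> (\<forall>i\<in>I. \<forall>j\<in>I. cinner (w i) (w j) = (if i = j then 1 else 0))"

lemma orthonormal_seq_imp_orthonormal_on: "orthonormal_seq u \<Longrightarrow> orthonormal_on I u"
  by (simp add: orthonormal_seq_def orthonormal_on_def)

lemma orthonormal_seq_comp_inj: "orthonormal_seq u \<Longrightarrow> inj g \<Longrightarrow> orthonormal_seq (u \<circ> g)"
  unfolding orthonormal_seq_def inj_def by auto

lemma norm_orthonormal_seq: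
  assumes "orthonormal_seq u"
  shows "norm (u m) = 1"
proof -
  have "(norm (u m))\<^sup>2 = 1"
    using assms cinner_self[of "u m"] by (metis orthonormal_seq_def of_real_eq_1_iff)
  then show ?thesis using norm_ge_zero[of "u m"] by (simp add: power2_eq_1_iff)
qed

lemma cinner_sum_orthonormal:
  assumes "orthonormal_on I w" "finite I" "j \<in> I"
  shows "cinner (\<Sum>i\<in>I. scaleC (c i) (w i)) (w j) = c j"
proof -
  have "cinner (\<Sum>i\<in>I. scaleC (c i) (w i)) (w j) = (\<Sum>i\<in>I. if i = j then c i else 0)"
    using assms(1,3)
    by (auto simp: cinner_sum_left cinner_scaleC_left orthonormal_on_def intro!: sum.cong)
  then show ?thesis using assms(2,3) by simp
qed

lemma norm_sum_orthonormal:
  assumes "orthonormal_on I w" "finite I"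
  shows "(norm (\<Sum>i\<in>I. scaleC (c i) (w i)))\<^sup>2 = (\<Sum>i\<in>I. (cmod (c i))\<^sup>2)"
proof -
  let ?s = "\<Sum>i\<in>I. scaleC (c i) (w i)"
  have "cinner ?s ?s = (\<Sum>i\<in>I. cnj (c i) * c i)"
    using assms by (simp add: cinner_sum_right cinner_scaleC_right cinner_sum_orthonormal)
  also have "\<dots> = of_real (\<Sum>i\<in>I. (cmod (c i))\<^sup>2)"
    unfolding of_real_sum by (intro sum.cong refl) (metis complex_norm_square mult.commute of_real_power)
  finally show ?thesis using cinner_self[of ?s] by (metis of_real_eq_iff)
qed

lemma pythagoras:
  assumes "cinner x y = 0"
  shows "(norm (x + y))\<^sup>2 = (norm x)\<^sup>2 + (norm y)\<^sup>2"
proof -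
  have "cinner (x + y) (x + y) = cinner x x + cinner y y"
    using assms cinner_commute[of x y] by (simp add: cinner_add_left cinner_add_right)
  then show ?thesis by (metis cinner_self of_real_add of_real_eq_iff)
qed

lemma bessel_inequality:
  assumes "orthonormal_on I w" "finite I"
  shows "(\<Sum>i\<in>I. (cmod (cinner x (w i)))\<^sup>2) \<le> (norm x)\<^sup>2"
proof -
  define s where "s = (\<Sum>i\<in>I. scaleC (cinner x (w i)) (w i))"
  have "cinner (x - s) (w j) = 0" if "j \<in> I" for j
    using cinner_sum_orthonormal[OF assms that] by (simp add: s_def cinner_diff_left)
  then have "cinner (x - s) s = 0"
    unfolding s_def by (simp add: cinner_sum_right cinner_scaleC_right)
  then have "(norm (x - s + s))\<^sup>2 = (norm (x - s))\<^sup>2 + (norm s)\<^sup>2"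
    by (rule pythagoras)
  then show ?thesis
    using norm_sum_orthonormal[OF assms] by (simp add: s_def)
qed

lemma summable_cinner_orthonormal_seq:
  "orthonormal_seq u \<Longrightarrow> summable (\<lambda>m. (cmod (cinner x (u m)))\<^sup>2)"
  by (rule summableI_nonneg_bounded[where x="(norm x)\<^sup>2"])
    (auto simp: lessThan_atLeast0[symmetric]
      intro: bessel_inequality orthonormal_seq_imp_orthonormal_on)

lemma tendsto_cinner_orthonormal_seq:
  assumes "orthonormal_seq u"
  shows "(\<lambda>m. cinner (u m) x) \<longlonglongrightarrow> 0"
proof -
  have "(\<lambda>m. (cmod (cinner x (u m)))\<^sup>2) \<longlonglongrightarrow> 0"
    using assms by (intro summable_LIMSEQ_zero summable_cinner_orthonormal_seq)
  then have "(\<lambda>m. cmod (cinner (u m) x)) \<longlonglongrightarrow> 0"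
    using tendsto_real_sqrt by (fastforce simp: cinner_commute[of "u _" x])
  then show ?thesis by (simp add: tendsto_norm_zero_iff)
qed

lemma inj_orthonormal_seq:
  assumes "orthonormal_seq u"
  shows "inj u"
proof (rule injI)
  fix i j assume "u i = u j"
  then have "cinner (u i) (u j) = 1"
    using assms by (simp add: orthonormal_seq_def)
  then show "i = j"
    using assms by (simp add: orthonormal_seq_def split: if_splits)
qed

lemma orthonormal_on_range:
  assumes "orthonormal_seq u"
  shows "orthonormal_on (range u) id"
  using assms inj_orthonormal_seq[OF assms]
  unfolding orthonormal_on_def orthonormal_seq_def by (auto simp: inj_eq)

lemma independent_orthonormal_seq:
  assumes "orthonormal_seq u"
  shows "cvs.independent (range u)"
  unfolding cvs.dependent_explicit
proof clarify
  fix t c v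
  assume t: "finite t" "t \<subseteq> range u" and sum: "(\<Sum>v\<in>t. scaleC (c v) v) = 0"
    and v: "v \<in> t" "c v \<noteq> 0"
  have "orthonormal_on t id"
    using orthonormal_on_range[OF assms] t(2) unfolding orthonormal_on_def by blast
  then have "cinner (\<Sum>v\<in>t. scaleC (c v) (id v)) (id v) = c v"
    using t(1) v(1) by (rule cinner_sum_orthonormal)
  then show False using sum v(2) by simp
qed

lemma inf_dim_orthonormal_seq:
  assumes u: "orthonormal_seq u" and M: "range u \<subseteq> M"
  shows "inf_dim M"
  unfolding inf_dim_def
proof (intro allI impI notI)
  fix F assume F: "finite F \<and> F \<subseteq> M" and "cspan F = M"
  then have "range u \<subseteq> cvs.span F" using M by (simp add: cspan_eq_span)
  then have "finite (range u)"
    using cvs.independent_span_bound[OF _ independent_orthonormal_seq[OF u]] F by blast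
  then show False using inj_orthonormal_seq[OF u] range_inj_infinite by blast
qed

lemma orthonormal_seq_by_extension:
  fixes K :: "'a::chilbert set"
  assumes extend: "\<And>n w. orthonormal_on {..<n} w \<Longrightarrow> \<forall>i<n. w i \<in> K \<Longrightarrow>
      \<exists>x\<in>K. norm x = 1 \<and> (\<forall>i<n. cinner x (w i) = 0) \<and> P n x"
  obtains u where "orthonormal_seq u" "\<forall>n. u n \<in> K" "\<forall>n. P n (u n)"
proof -
  define admissible where "admissible n w \<longleftrightarrow>
      orthonormal_on {..<n} w \<and> (\<forall>i<n. w i \<in> K \<and> P i (w i))" for n and w :: "nat \<Rightarrow> 'a"
  have "\<exists>w'. admissible (Suc n) w' \<and> (\<forall>i<n. w' i = w i)" if w: "admissible n w" for n w
  proof -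
    obtain x where x: "x \<in> K" "norm x = 1" "\<forall>i<n. cinner x (w i) = 0" "P n x"
      using extend[of n w] w unfolding admissible_def by auto
    have "cinner x x = 1"
      using x(2) cinner_self[of x] by simp
    moreover have "\<forall>i<n. cinner (w i) x = 0"
      using x(3) by (metis cinner_commute complex_cnj_zero)
    ultimately have "orthonormal_on {..<Suc n} (w(n := x))"
      using w x(3) unfolding admissible_def orthonormal_on_def by (auto simp: less_Suc_eq)
    then have "admissible (Suc n) (w(n := x))"
      using w x unfolding admissible_def by (auto simp: less_Suc_eq)
    then show ?thesis by auto
  qed
  moreover have "admissible 0 w" for w
    by (simp add: admissible_def orthonormal_on_def)
  ultimately obtain f where f: "\<And>n. admissible n (f n)" "\<And>n i. i < n \<Longrightarrow> f (Suc n) i = f n i"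
    using dependent_nat_choice[of admissible "\<lambda>n w w'. \<forall>i<n. w' i = w i"] by metis
  have stable: "f (Suc i) i = f n i" if "i < n" for i n
    using that by (induction n) (auto simp: less_Suc_eq f(2))
  show ?thesis
  proof
    show "orthonormal_seq (\<lambda>i. f (Suc i) i)"
      unfolding orthonormal_seq_def
    proof (intro allI)
      fix i j
      define N where "N = Suc (max i j)"
      have "cinner (f N i) (f N j) = (if i = j then 1 else 0)"
        using f(1)[of N] unfolding admissible_def orthonormal_on_def N_def by simp
      moreover have "f (Suc i) i = f N i" "f (Suc j) j = f N j"
        unfolding N_def by (rule stable, simp)+
      ultimately show "cinner (f (Suc i) i) (f (Suc j) j) = (if i = j then 1 else 0)"
        by simp
    qed
    show "\<forall>n. f (Suc n) n \<in> K" "\<forall>n. P n (f (Suc n) n)"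
      using f(1) by (auto simp: admissible_def)
  qed
qed

lemma inf_dim_unit_orthogonal:
  assumes "inf_dim (UNIV :: 'a::chilbert set)" "orthonormal_on {..<n} (w :: nat \<Rightarrow> 'a)"
  shows "\<exists>x. norm x = 1 \<and> (\<forall>i<n. cinner x (w i) = 0)"
proof -
  obtain z where z: "z \<notin> cvs.span (w ` {..<n})"
    using assms(1) unfolding inf_dim_def cspan_eq_span by blast
  define y where "y = z - (\<Sum>i<n. scaleC (cinner z (w i)) (w i))"
  have "(\<Sum>i<n. scaleC (cinner z (w i)) (w i)) \<in> cvs.span (w ` {..<n})"
    by (intro cvs.span_sum cvs.span_scale cvs.span_base) auto
  then have "y \<noteq> 0" using z by (auto simp: y_def)
  moreover have "cinner y (w i) = 0" if "i < n" for i
    using cinner_sum_orthonormal[OF assms(2)] that by (simp add: y_def cinner_diff_left)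
  ultimately show ?thesis
    by (intro exI[of _ "sgn y"]) (simp add: sgn_div_norm divide_inverse cinner_scaleR_left)
qed

lemma inf_dim_obtains_orthonormal_seq:
  assumes "inf_dim (UNIV :: 'a set)"
  obtains u :: "nat \<Rightarrow> 'a::chilbert" where "orthonormal_seq u"
  using orthonormal_seq_by_extension[of UNIV "\<lambda>_ _. True"] inf_dim_unit_orthogonal[OF assms] by auto

lemma summable_orthonormal_expansion:
  assumes "orthonormal_seq e"
  shows "summable (\<lambda>m. scaleC (cinner x (e m)) (e m))"
  unfolding summable_Cauchy
proof (intro allI impI)
  fix r :: real assume r: "r > 0"
  obtain N where N: "\<forall>m\<ge>N. \<forall>n. norm (\<Sum>i\<in>{m..<n}. (cmod (cinner x (e i)))\<^sup>2) < r\<^sup>2"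
    using summable_cinner_orthonormal_seq[OF assms, of x, unfolded summable_Cauchy] r
    by (meson zero_less_power)
  have "norm (\<Sum>i\<in>{m..<n}. scaleC (cinner x (e i)) (e i)) < r" if "m \<ge> N" for m n
  proof -
    have "(norm (\<Sum>i\<in>{m..<n}. scaleC (cinner x (e i)) (e i)))\<^sup>2
        = (\<Sum>i\<in>{m..<n}. (cmod (cinner x (e i)))\<^sup>2)"
      using assms by (simp add: norm_sum_orthonormal orthonormal_seq_imp_orthonormal_on)
    also have "\<dots> < r\<^sup>2"
      using N that by (simp add: sum_nonneg)
    finally show ?thesis
      using r by (simp add: power_less_imp_less_base)
  qed
  then show "\<exists>N. \<forall>m\<ge>N. \<forall>n. norm (\<Sum>i\<in>{m..<n}. scaleC (cinner x (e i)) (e i)) < r"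
    by blast
qed

lemma orthogonal_projection_closure_cspan:
  assumes e: "orthonormal_seq e"
  obtains y where "y \<in> closure (cspan (range e))"
    "\<forall>z\<in>closure (cspan (range e)). cinner (x - y) z = 0"
proof
  let ?f = "\<lambda>m. scaleC (cinner x (e m)) (e m)"
  have lim: "(\<lambda>n. \<Sum>m<n. ?f m) \<longlonglongrightarrow> suminf ?f"
    by (rule summable_LIMSEQ[OF summable_orthonormal_expansion[OF e]])
  have "(\<Sum>m<n. ?f m) \<in> cspan (range e)" for n
    unfolding cspan_eq_span by (intro cvs.span_sum cvs.span_scale cvs.span_base) auto
  then show "suminf ?f \<in> closure (cspan (range e))"
    using lim unfolding closure_sequential by (intro exI[where x="\<lambda>n. \<Sum>m<n. ?f m"]) simp
  have "cinner (x - suminf ?f) (e j) = 0" for j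
  proof -
    have "(\<lambda>n. cinner (x - (\<Sum>m<n. ?f m)) (e j)) \<longlonglongrightarrow> cinner (x - suminf ?f) (e j)"
      by (intro bounded_linear.tendsto[OF bounded_linear_cinner_left] tendsto_diff tendsto_const lim)
    moreover have "\<forall>\<^sub>F n in sequentially. cinner (x - (\<Sum>m<n. ?f m)) (e j) = 0"
      using eventually_gt_at_top[of j]
      by eventually_elim
        (simp add: cinner_diff_left cinner_sum_orthonormal[OF orthonormal_seq_imp_orthonormal_on[OF e]])
    then have "(\<lambda>n. cinner (x - (\<Sum>m<n. ?f m)) (e j)) \<longlonglongrightarrow> 0"
      by (rule tendsto_eventually)
    ultimately show ?thesis by (rule LIMSEQ_unique)
  qed
  then show "\<forall>z\<in>closure (cspan (range e)). cinner (x - suminf ?f) z = 0"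
    using superset_closure_cspan[of "{x - suminf ?f}"]
    by (blast intro: orthogonal_closure_cspan[of "{x - suminf ?f}" "range e"])
qed

lemma cproj_eq:
  assumes M: "csubspace M" and y: "y \<in> M" "\<forall>z\<in>M. cinner (x - y) z = 0"
  shows "cproj M x = y"
  unfolding cproj_def
proof (rule the_equality)
  fix y' assume y': "y' \<in> M \<and> (\<forall>z\<in>M. cinner (x - y') z = 0)"
  then have "y' - y \<in> M"
    using M y by (simp add: csubspace_eq_subspace cvs.subspace_diff)
  moreover have "(x - y) - (x - y') = y' - y"
    by (simp add: algebra_simps)
  ultimately have "cinner (y' - y) (y' - y) = 0"
    using y y' cinner_diff_left[of "x - y" "x - y'" "y' - y"] by simp
  then show "y' = y"
    by (simp add: cinner_self)
qed (use y in blast)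

lemma cinner_cproj_closure_cspan:
  assumes "orthonormal_seq e" "z \<in> closure (cspan (range e))"
  shows "cinner (cproj (closure (cspan (range e))) x) z = cinner x z"
proof -
  obtain y where y: "y \<in> closure (cspan (range e))"
    "\<forall>z\<in>closure (cspan (range e)). cinner (x - y) z = 0"
    using orthogonal_projection_closure_cspan[OF assms(1)] by blast
  then have "cproj (closure (cspan (range e))) x = y"
    by (intro cproj_eq csubspace_closure_cspan)
  then show ?thesis
    using y assms(2) by (simp add: cinner_diff_left)
qed

abbreviation qform :: "('a::chilbert \<Rightarrow>\<^sub>L 'a) \<Rightarrow> 'a \<Rightarrow> complex" where
  "qform T x \<equiv> cinner (blinfun_apply T x) x"

lemma norm_qform_le: "cmod (qform T x) \<le> norm T * (norm x)\<^sup>2"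
proof -
  have "cmod (qform T x) \<le> norm (blinfun_apply T x) * norm x"
    by (rule Cauchy_Schwarz_cinner)
  also have "\<dots> \<le> norm T * norm x * norm x"
    by (intro mult_right_mono norm_blinfun) simp
  finally show ?thesis by (simp add: power2_eq_square mult.assoc)
qed

lemma norm_qform_diff_le:
  "cmod (qform T x - qform T y) \<le> norm T * (norm x + norm y) * norm (x - y)"
proof -
  have "qform T x - qform T y = cinner (blinfun_apply T x) (x - y) + cinner (blinfun_apply T (x - y)) y"
    by (simp add: cinner_diff_left cinner_diff_right blinfun.diff_right)
  also have "cmod \<dots> \<le> norm T * norm x * norm (x - y) + norm T * norm (x - y) * norm y"
  proof (rule norm_triangle_le[OF add_mono])
    show "cmod (cinner (blinfun_apply T x) (x - y)) \<le> norm T * norm x * norm (x - y)"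
      by (rule order_trans[OF Cauchy_Schwarz_cinner mult_right_mono[OF norm_blinfun]]) simp
    show "cmod (cinner (blinfun_apply T (x - y)) y) \<le> norm T * norm (x - y) * norm y"
      by (rule order_trans[OF Cauchy_Schwarz_cinner mult_right_mono[OF norm_blinfun]]) simp
  qed
  finally show ?thesis by (simp add: algebra_simps)
qed

lemma norm_qform_diff_operator_le:
  "norm x = 1 \<Longrightarrow> cmod (qform T x - qform S x) \<le> norm (T - S)"
  using norm_qform_le[of "T - S" x] by (simp add: blinfun.diff_left cinner_diff_left)

lemma norm_sgn_diff_le:
  fixes y u :: "'a::real_normed_vector"
  assumes "norm u = 1"
  shows "norm (sgn y - u) \<le> 2 * norm (y - u)"
proof (cases "y = 0")
  case False
  have "sgn y - y = (inverse (norm y) - 1) *\<^sub>R y"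
    by (simp add: sgn_div_norm scaleR_diff_left)
  then have "norm (sgn y - y) = \<bar>inverse (norm y) - 1\<bar> * norm y"
    by simp
  also have "\<dots> = \<bar>(inverse (norm y) - 1) * norm y\<bar>"
    by (simp add: abs_mult)
  also have "\<dots> = \<bar>1 - norm y\<bar>"
    using False by (simp add: left_diff_distrib)
  also have "\<dots> \<le> norm (y - u)"
    using assms norm_triangle_ineq3[of y u] by (simp add: abs_minus_commute)
  finally show ?thesis
    using norm_triangle_ineq[of "sgn y - y" "y - u"] by simp
qed (use assms in simp)

lemma tendsto_qform_sgn:
  assumes u: "\<And>m. norm (u m) = 1" and lim: "(\<lambda>m. qform T (u m)) \<longlonglongrightarrow> l"
    and y: "(\<lambda>m. y m - u m) \<longlonglongrightarrow> 0"
  shows "(\<lambda>m. qform T (sgn (y m))) \<longlonglongrightarrow> l"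
proof -
  have bound: "cmod (qform T (sgn (y m)) - qform T (u m)) \<le> norm T * 2 * (2 * norm (y m - u m))"
    for m
  proof -
    have "norm (sgn (y m)) + norm (u m) \<le> 2"
      using u[of m] by (simp add: norm_sgn)
    then have "norm T * (norm (sgn (y m)) + norm (u m)) * norm (sgn (y m) - u m)
        \<le> norm T * 2 * (2 * norm (y m - u m))"
      using norm_sgn_diff_le[OF u, of "y m"]
      by (intro mult_mono[OF mult_left_mono]) simp_all
    with norm_qform_diff_le[of T "sgn (y m)" "u m"] show ?thesis
      by linarith
  qed
  have "(\<lambda>m. norm T * 2 * (2 * norm (y m - u m))) \<longlonglongrightarrow> 0"
    using y by (intro tendsto_mult_right_zero tendsto_norm_zero)
  then have "(\<lambda>m. qform T (sgn (y m)) - qform T (u m)) \<longlonglongrightarrow> 0"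
    by (rule Lim_null_comparison[OF always_eventually[OF allI[OF bound]]])
  from tendsto_add[OF this lim] show ?thesis
    by simp
qed

lemma ess_numrange_mono: "K \<subseteq> K' \<Longrightarrow> ess_numrange K T \<subseteq> ess_numrange K' T"
  unfolding ess_numrange_def by blast

lemma ess_numrange_nonempty:
  assumes "inf_dim (UNIV :: 'a set)"
  shows "ess_numrange UNIV (blinfun_apply (T :: 'a::chilbert \<Rightarrow>\<^sub>L 'a)) \<noteq> {}"
proof -
  obtain e :: "nat \<Rightarrow> 'a" where e: "orthonormal_seq e"
    using inf_dim_obtains_orthonormal_seq[OF assms] by blast
  have "qform T (e m) \<in> cball 0 (norm T)" for m
    using norm_qform_le[of T "e m"] by (simp add: norm_orthonormal_seq[OF e])
  then obtain l r where r: "strict_mono r" "((\<lambda>m. qform T (e m)) \<circ> r) \<longlonglongrightarrow> l"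
    using compact_cball[of 0 "norm T"] unfolding compact_def by meson
  moreover have "orthonormal_seq (e \<circ> r)"
    using orthonormal_seq_comp_inj[OF e strict_mono_imp_inj_on[OF r(1)]] .
  ultimately have "l \<in> ess_numrange UNIV (blinfun_apply T)"
    unfolding ess_numrange_def by (auto simp: o_def)
  then show ?thesis by blast
qed

lemma ess_numrange_unit_orthogonal:
  assumes K: "csubspace K" and l: "l \<in> ess_numrange K (blinfun_apply T)"
    and w: "orthonormal_on {..<p::nat} w" "\<forall>i<p. w i \<in> K" and e: "e > 0"
  shows "\<exists>x\<in>K. norm x = 1 \<and> (\<forall>i<p. cinner x (w i) = 0) \<and> cmod (qform T x - l) < e"
proof -
  obtain u where u: "\<forall>m. u m \<in> K" "orthonormal_seq u" "(\<lambda>m. qform T (u m)) \<longlonglongrightarrow> l"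
    using l unfolding ess_numrange_def by blast
  \<comment> \<open>the components of \<open>u m\<close> along \<open>w\<close> tend to 0 (Bessel), so removing them and
    renormalising does not change the limit of the quadratic form\<close>
  define y where "y m = u m - (\<Sum>i<p. scaleC (cinner (u m) (w i)) (w i))" for m
  have y_in: "y m \<in> K" for m
    using K u(1) w(2) unfolding y_def csubspace_eq_subspace
    by (intro cvs.subspace_diff cvs.subspace_sum cvs.subspace_scale) auto
  have y_orth: "cinner (y m) (w i) = 0" if "i < p" for m i
    using cinner_sum_orthonormal[OF w(1), of i "\<lambda>i. cinner (u m) (w i)"] that
    by (simp add: y_def cinner_diff_left)
  have "(\<lambda>m. \<Sum>i<p. scaleC (cinner (u m) (w i)) (w i)) \<longlonglongrightarrow> (\<Sum>i<p. scaleC 0 (w i))"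
    by (intro tendsto_sum bounded_linear.tendsto[OF bounded_linear_scaleC_left]
        tendsto_cinner_orthonormal_seq u(2))
  then have y_u: "(\<lambda>m. y m - u m) \<longlonglongrightarrow> 0"
    using tendsto_minus by (fastforce simp: y_def)
  have "(\<lambda>m. qform T (sgn (y m))) \<longlonglongrightarrow> l"
    using norm_orthonormal_seq[OF u(2)] u(3) y_u by (rule tendsto_qform_sgn)
  then have "\<forall>\<^sub>F m in sequentially. cmod (qform T (sgn (y m)) - l) < e"
    using e by (simp add: tendsto_iff dist_norm)
  moreover have "\<forall>\<^sub>F m in sequentially. y m \<noteq> 0"
    using tendstoD[OF y_u zero_less_one]
    by (rule eventually_mono) (use norm_orthonormal_seq[OF u(2)] in force)
  ultimately obtain m where m: "cmod (qform T (sgn (y m)) - l) < e" "y m \<noteq> 0"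
    using eventually_happens'[OF sequentially_bot] eventually_conj by blast
  have "sgn (y m) \<in> K"
    using csubspace_scaleR[OF K y_in] by (simp add: sgn_div_norm)
  moreover have "cinner (sgn (y m)) (w i) = 0" if "i < p" for i
    using y_orth[OF that] by (simp add: sgn_div_norm cinner_scaleR_left)
  ultimately show ?thesis
    using m by (intro bexI[of _ "sgn (y m)"]) (auto simp: norm_sgn)
qed

lemma LIMSEQ_of_norm_diff_less_inverse_Suc:
  assumes "\<And>n. norm (f n - l) < inverse (real (Suc n))"
  shows "f \<longlonglongrightarrow> l"
proof -
  have "(\<lambda>n. f n - l) \<longlonglongrightarrow> 0"
    by (rule Lim_null_comparison[OF always_eventually[OF allI[OF less_imp_le[OF assms]]]
          LIMSEQ_inverse_real_of_nat])
  then show ?thesis by (simp add: LIM_zero_iff)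
qed

lemma in_ess_numrangeI:
  assumes approx: "\<And>p w e. orthonormal_on {..<p::nat} w \<Longrightarrow> \<forall>i<p. w i \<in> K \<Longrightarrow> e > 0 \<Longrightarrow>
      \<exists>x\<in>K. norm x = 1 \<and> (\<forall>i<p. cinner x (w i) = 0) \<and> cmod (qform T x - l) < e"
  shows "l \<in> ess_numrange K (blinfun_apply T)"
proof -
  have "\<exists>x\<in>K. norm x = 1 \<and> (\<forall>i<n. cinner x (w i) = 0) \<and> cmod (qform T x - l) < inverse (Suc n)"
    if "orthonormal_on {..<n} w" "\<forall>i<n. w i \<in> K" for n w
    using approx[OF that, of "inverse (real (Suc n))"] by simp
  then obtain u where u: "orthonormal_seq u" "\<forall>n. u n \<in> K"
    "\<forall>n. cmod (qform T (u n) - l) < inverse (real (Suc n))"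
    by (rule orthonormal_seq_by_extension)
  then have "(\<lambda>n. qform T (u n)) \<longlonglongrightarrow> l"
    by (intro LIMSEQ_of_norm_diff_less_inverse_Suc) blast
  then show ?thesis
    unfolding ess_numrange_def using u by blast
qed

lemma closed_ess_numrange_graph:
  assumes K: "csubspace K"
  shows "closed {(T, l). l \<in> ess_numrange K (blinfun_apply T)}" (is "closed ?G")
proof -
  have graph: "l \<in> ess_numrange K (blinfun_apply T)" if Tl: "(T, l) \<in> closure ?G" for T l
  proof (rule in_ess_numrangeI)
    fix p w and e :: real
    assume w: "orthonormal_on {..<p::nat} w" "\<forall>i<p. w i \<in> K" and "e > 0"
    then have e3: "e / 3 > 0" by simp
    obtain T' l' where T'l': "l' \<in> ess_numrange K (blinfun_apply T')" "dist (T', l') (T, l) < e / 3"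
      using Tl[unfolded closure_approachable, rule_format, OF e3] by auto
    have "dist T' T < e / 3" "dist l' l < e / 3"
      using T'l'(2) dist_fst_le[of "(T', l')" "(T, l)"] dist_snd_le[of "(T', l')" "(T, l)"]
      by simp_all
    then have close: "norm (T - T') < e / 3" "cmod (l' - l) < e / 3"
      by (simp_all add: dist_norm norm_minus_commute)
    obtain x where x: "x \<in> K" "norm x = 1" "\<forall>i<p. cinner x (w i) = 0"
      "cmod (qform T' x - l') < e / 3"
      using ess_numrange_unit_orthogonal[OF K T'l'(1) w e3] by blast
    have "cmod (qform T x - qform T' x) < e / 3"
      using norm_qform_diff_operator_le[OF x(2), of T T'] close(1) by linarith
    then have "cmod (qform T x - l) < e / 3 + e / 3 + e / 3"
      by (rule norm_diff_triangle_less[OF norm_diff_triangle_less[OF _ x(4)] close(2)])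
    then show "\<exists>x\<in>K. norm x = 1 \<and> (\<forall>i<p. cinner x (w i) = 0) \<and> cmod (qform T x - l) < e"
      using x(1-3) by (intro bexI[of _ x]) simp_all
  qed
  have "closure ?G \<subseteq> ?G"
  proof
    fix Tl assume Tl: "Tl \<in> closure ?G"
    obtain T l where "Tl = (T, l)" by fastforce
    then show "Tl \<in> ?G" using graph Tl by blast
  qed
  then show ?thesis
    by (simp add: closure_subset_eq)
qed

lemma closure_subset_ess_numrange_graph:
  assumes K: "csubspace K" and S: "closed S" "continuous_on S A"
    and D: "\<And>t l. (t, l) \<in> D \<Longrightarrow> t \<in> S \<and> l \<in> ess_numrange K (blinfun_apply (A t))"
    and tl: "(t, l) \<in> closure D"
  shows "l \<in> ess_numrange K (blinfun_apply (A t))"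
proof -
  have "closure D \<subseteq> S \<times> UNIV"
    using D S(1) by (intro closure_minimal closed_Times) auto
  then have "continuous_on (closure D) (\<lambda>p. (A (fst p), snd p))"
    using S(2) by (intro continuous_on_subset[OF _ \<open>closure D \<subseteq> S \<times> UNIV\<close>] continuous_intros
        continuous_on_compose2[OF S(2) continuous_on_fst]) auto
  moreover have "(\<lambda>p. (A (fst p), snd p)) ` D \<subseteq> {(T, l). l \<in> ess_numrange K (blinfun_apply T)}"
    using D by auto
  ultimately have "(\<lambda>p. (A (fst p), snd p)) ` closure D \<subseteq> {(T, l). l \<in> ess_numrange K (blinfun_apply T)}"
    by (intro image_closure_subset closed_ess_numrange_graph K)
  then show ?thesis
    using tl by auto
qed

lemma ess_numrange_cproj:
  assumes "\<And>x z. z \<in> M \<Longrightarrow> cinner (cproj M x) z = cinner x z"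
  shows "ess_numrange M (\<lambda>x. cproj M (T x)) = ess_numrange M T"
  unfolding ess_numrange_def using assms by (simp cong: conj_cong)

definition block_span :: "(nat \<Rightarrow> 'a::chilbert) \<Rightarrow> nat \<Rightarrow> 'a set" where
  "block_span v k = closure (cspan (range (\<lambda>m. v (prod_encode (k, m)))))"

lemma orthonormal_seq_block:
  "orthonormal_seq v \<Longrightarrow> orthonormal_seq (\<lambda>m. v (prod_encode (k, m)))"
  using orthonormal_seq_comp_inj[of v "\<lambda>m. prod_encode (k, m)"]
  by (simp add: o_def inj_def prod_encode_eq)

lemma closed_block_span: "closed (block_span v k)"
  by (simp add: block_span_def)

lemma csubspace_block_span: "csubspace (block_span v k)"
  by (simp add: block_span_def csubspace_closure_cspan)

lemma inf_dim_block_span: "orthonormal_seq v \<Longrightarrow> inf_dim (block_span v k)"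
  unfolding block_span_def
  by (rule inf_dim_orthonormal_seq[OF orthonormal_seq_block superset_closure_cspan])

lemma orthogonal_block_span:
  assumes "orthonormal_seq v" "k \<noteq> l" "x \<in> block_span v k" "y \<in> block_span v l"
  shows "cinner x y = 0"
  using assms unfolding block_span_def orthonormal_seq_def
  by (intro orthogonal_closure_cspan[of "range (\<lambda>m. v (prod_encode (k, m)))"
        "range (\<lambda>m. v (prod_encode (l, m)))"]) (auto simp: prod_encode_eq)

lemma ess_numrange_cproj_block_span:
  assumes "orthonormal_seq v"
  shows "ess_numrange (block_span v k) (\<lambda>x. cproj (block_span v k) (T x))
    = ess_numrange (block_span v k) T"
  unfolding block_span_def
  by (intro ess_numrange_cproj cinner_cproj_closure_cspan orthonormal_seq_block assms)

lemma orthonormal_blocks_realising_ess_numrange: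
  fixes T :: "nat \<Rightarrow> ('a::chilbert \<Rightarrow>\<^sub>L 'a)"
  assumes l: "\<And>j. l j \<in> ess_numrange UNIV (blinfun_apply (T j))"
  obtains v where "orthonormal_seq v" "\<And>k j. l j \<in> ess_numrange (block_span v k) (blinfun_apply (T j))"
proof -
  \<comment> \<open>\<open>v n\<close> with \<open>n = prod_encode (k, prod_encode (j, i))\<close> realises \<open>l j\<close> up to \<open>1 / (i + 1)\<close>\<close>
  define j_of where "j_of n = fst (prod_decode (snd (prod_decode n)))" for n
  define i_of where "i_of n = snd (prod_decode (snd (prod_decode n)))" for n
  have "\<exists>x\<in>UNIV. norm x = 1 \<and> (\<forall>i<n. cinner x (w i) = 0) \<and>
      cmod (qform (T (j_of n)) x - l (j_of n)) < inverse (real (Suc (i_of n)))"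
    if "orthonormal_on {..<n} w" "\<forall>i<n. w i \<in> UNIV" for n w
    using ess_numrange_unit_orthogonal[OF csubspace_UNIV l that] by simp
  then obtain v where v: "orthonormal_seq v"
    "\<forall>n. cmod (qform (T (j_of n)) (v n) - l (j_of n)) < inverse (real (Suc (i_of n)))"
    by (rule orthonormal_seq_by_extension)
  have "l j \<in> ess_numrange (block_span v k) (blinfun_apply (T j))" for k j
  proof -
    define u where "u = (\<lambda>i. v (prod_encode (k, prod_encode (j, i))))"
    have u_orth: "orthonormal_seq u"
      using orthonormal_seq_comp_inj[OF orthonormal_seq_block[OF v(1)], of "\<lambda>i. prod_encode (j, i)"]
      by (simp add: u_def o_def inj_def prod_encode_eq)
    have "cmod (qform (T j) (u i) - l j) < inverse (real (Suc i))" for i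
      using v(2)[rule_format, of "prod_encode (k, prod_encode (j, i))"]
      by (simp add: u_def j_of_def i_of_def)
    then have u_lim: "(\<lambda>i. qform (T j) (u i)) \<longlonglongrightarrow> l j"
      by (rule LIMSEQ_of_norm_diff_less_inverse_Suc)
    have "u i \<in> block_span v k" for i
      unfolding u_def block_span_def
      by (rule subsetD[OF superset_closure_cspan], rule image_eqI[where x="prod_encode (j, i)"]) simp_all
    with u_orth u_lim show ?thesis
      unfolding ess_numrange_def by blast
  qed
  with v(1) show ?thesis by (rule that)
qed

lemma dense_seqE:
  fixes G :: "'a::{metric_space, second_countable_topology} set"
  assumes "G \<noteq> {}"
  obtains s :: "nat \<Rightarrow> 'a" where "range s \<subseteq> G" "G \<subseteq> closure (range s)"
proof -
  obtain D where D: "countable D" "D \<subseteq> G" "G \<subseteq> closure D"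
    by (rule separable)
  with assms have "D \<noteq> {}" by auto
  with D show ?thesis
    by (intro that[of "from_nat_into D"]) simp_all
qed

lemma orthonormal_blocks_preserving_ess_numrange:
  fixes A :: "'b::{metric_space, second_countable_topology} \<Rightarrow> ('a::chilbert \<Rightarrow>\<^sub>L 'a)"
  assumes inf: "inf_dim (UNIV :: 'a set)"
    and S: "closed S" "S \<noteq> {}" "continuous_on S A"
  obtains v where "orthonormal_seq v"
    "\<And>k t. t \<in> S \<Longrightarrow>
      ess_numrange (block_span v k) (blinfun_apply (A t)) = ess_numrange UNIV (blinfun_apply (A t))"
proof -
  define G where "G = {(t, l). t \<in> S \<and> l \<in> ess_numrange UNIV (blinfun_apply (A t))}"
  obtain t0 where "t0 \<in> S" using S(2) by blast
  moreover obtain l0 where "l0 \<in> ess_numrange UNIV (blinfun_apply (A t0))"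
    using ess_numrange_nonempty[OF inf] by blast
  ultimately have "G \<noteq> {}" by (auto simp: G_def)
  then obtain s :: "nat \<Rightarrow> 'b \<times> complex" where s: "range s \<subseteq> G" "G \<subseteq> closure (range s)"
    by (rule dense_seqE) blast
  have "snd (s j) \<in> ess_numrange UNIV (blinfun_apply (A (fst (s j))))" for j
  proof -
    have "s j \<in> G" using s(1) by blast
    then show ?thesis by (cases "s j") (simp add: G_def)
  qed
  then obtain v where v: "orthonormal_seq v"
    "\<And>k j. snd (s j) \<in> ess_numrange (block_span v k) (blinfun_apply (A (fst (s j))))"
    by (rule orthonormal_blocks_realising_ess_numrange[of "\<lambda>j. snd (s j)" "\<lambda>j. A (fst (s j))"]) blast
  have range_s: "t \<in> S \<and> l \<in> ess_numrange (block_span v k) (blinfun_apply (A t))"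
    if tl: "(t, l) \<in> range s" for k t l
  proof -
    obtain j where j: "s j = (t, l)"
      using tl by auto
    then have "s j \<in> G"
      using s(1) by blast
    then show ?thesis
      using v(2)[of j k] j by (simp add: G_def)
  qed
  have "ess_numrange UNIV (blinfun_apply (A t)) \<subseteq> ess_numrange (block_span v k) (blinfun_apply (A t))"
    if "t \<in> S" for k t
  proof
    fix l assume "l \<in> ess_numrange UNIV (blinfun_apply (A t))"
    with that s(2) have "(t, l) \<in> closure (range s)"
      by (auto simp: G_def)
    then show "l \<in> ess_numrange (block_span v k) (blinfun_apply (A t))"
      using closure_subset_ess_numrange_graph[OF csubspace_block_span S(1,3) range_s] by blast
  qed
  then show ?thesis
    by (intro that[OF v(1)] subset_antisym[OF ess_numrange_mono]) simp_all
qed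

theorem lemma6p1:
  fixes A :: "real \<Rightarrow> ('a::chilbert \<Rightarrow>\<^sub>L 'a)"
  assumes "inf_dim (UNIV :: 'a set)"
    and "separable_space TYPE('a)"
    and "continuous_on {0..1} A"
    and "\<forall>t\<in>{0..1}. clinear_op (A t)"
  shows "\<exists>M :: nat \<Rightarrow> 'a set.
           (\<forall>k. closed (M k) \<and> csubspace (M k) \<and> inf_dim (M k)) \<and>
           (\<forall>k l. k \<noteq> l \<longrightarrow> (\<forall>x\<in>M k. \<forall>y\<in>M l. cinner x y = 0)) \<and>
           (\<forall>k. \<forall>t\<in>{0..1}.
              ess_numrange (M k) (\<lambda>x. cproj (M k) (blinfun_apply (A t) x))
                = ess_numrange UNIV (blinfun_apply (A t)))"
proof -
  obtain v where v: "orthonormal_seq v"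
    "\<And>k t. t \<in> {0..1} \<Longrightarrow>
      ess_numrange (block_span v k) (blinfun_apply (A t)) = ess_numrange UNIV (blinfun_apply (A t))"
    using orthonormal_blocks_preserving_ess_numrange[OF assms(1) closed_real_atLeastAtMost _ assms(3)] by auto
  show ?thesis
  proof (intro exI[of _ "block_span v"] conjI allI ballI impI)
    show "closed (block_span v k)" "csubspace (block_span v k)" "inf_dim (block_span v k)" for k
      by (simp_all add: closed_block_span csubspace_block_span inf_dim_block_span v(1))
    show "cinner x y = 0" if "k \<noteq> l" "x \<in> block_span v k" "y \<in> block_span v l" for k l x y
      using orthogonal_block_span[OF v(1) that] .
    show "ess_numrange (block_span v k) (\<lambda>x. cproj (block_span v k) (blinfun_apply (A t) x))
        = ess_numrange UNIV (blinfun_apply (A t))" if "t \<in> {0..1}" for k t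
      using ess_numrange_cproj_block_span[OF v(1)] v(2)[OF that] by simp
  qed
qed

end
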